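(* Let $(R,m)$ and $(T,\eta)$ be Noetherian local rings and let $R\to T$ be a finite local ring homomorphism such that $T$ is a free $R$-module and $T/mT$ is Gorenstein. Let $J\subseteq T$ be an ideal and let $h:R\to T/J$ be the composite of $R\to T$ with the projection $T\to T/J$, so that $T/J$ carries the $R$-module structure induced from $T$. Then $h$ splits, i.e. there exists an $R$-linear map $\rho:T/J\to R$ with $\rho(1)=1$, if and only if $\mathrm{Ann}_TJ\not\subseteq mT$.
   Context: All rings are commutative with identity. *)

theory Defs
  imports "HOL-Algebra.Algebra"
begin

definition local_ring :: "('a, 'm) ring_scheme \<Rightarrow> 'a set \<Rightarrow> bool" where
  "local_ring A m \<longleftrightarrow> cring A \<and> maximalideal m A \<and> (\<forall>I. maximalideal I A \<longrightarrow> I = m)"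

definition artinian_ring :: "('a, 'm) ring_scheme \<Rightarrow> bool" where
  "artinian_ring A \<longleftrightarrow> ring A \<and>
     (\<forall>I :: nat \<Rightarrow> 'a set. (\<forall>n. ideal (I n) A \<and> I (Suc n) \<subseteq> I n) \<longrightarrow>
        (\<exists>N. \<forall>n\<ge>N. I n = I N))"

definition socle :: "('a, 'm) ring_scheme \<Rightarrow> 'a set \<Rightarrow> 'a set" where
  "socle A n = {x \<in> carrier A. \<forall>y\<in>n. x \<otimes>\<^bsub>A\<^esub> y = \<zero>\<^bsub>A\<^esub>}"

text \<open>Artinian local Gorenstein ring: Artinian local ring (A,n) whose socle is a
  one-dimensional vector space over the residue field A/n, i.e. it is spanned by
  a single nonzero element.\<close>
definition gorenstein_artinian :: "('a, 'm) ring_scheme \<Rightarrow> bool" where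
  "gorenstein_artinian A \<longleftrightarrow> artinian_ring A \<and>
     (\<exists>n. local_ring A n \<and>
        (\<exists>s\<in>socle A n. s \<noteq> \<zero>\<^bsub>A\<^esub> \<and> socle A n = {a \<otimes>\<^bsub>A\<^esub> s | a. a \<in> carrier A}))"

definition finite_free_via :: "('a, 'm) ring_scheme \<Rightarrow> ('b, 'n) ring_scheme \<Rightarrow> ('a \<Rightarrow> 'b) \<Rightarrow> bool" where
  "finite_free_via R T \<phi> \<longleftrightarrow>
     (\<exists>B. finite B \<and> B \<subseteq> carrier T \<and>
        (\<forall>t\<in>carrier T. \<exists>!c. c \<in> B \<rightarrow>\<^sub>E carrier R \<and>
             t = (\<Oplus>\<^bsub>T\<^esub> b\<in>B. \<phi> (c b) \<otimes>\<^bsub>T\<^esub> b)))"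

definition annihilator :: "('b, 'n) ring_scheme \<Rightarrow> 'b set \<Rightarrow> 'b set" where
  "annihilator T J = {t \<in> carrier T. \<forall>j\<in>J. t \<otimes>\<^bsub>T\<^esub> j = \<zero>\<^bsub>T\<^esub>}"

definition splits :: "('a, 'm) ring_scheme \<Rightarrow> ('c, 'k) ring_scheme \<Rightarrow> ('a \<Rightarrow> 'c) \<Rightarrow> bool" where
  "splits R S h \<longleftrightarrow>
     (\<exists>\<rho>. \<rho> \<in> carrier S \<rightarrow> carrier R \<and>
        (\<forall>x\<in>carrier S. \<forall>y\<in>carrier S. \<rho> (x \<oplus>\<^bsub>S\<^esub> y) = \<rho> x \<oplus>\<^bsub>R\<^esub> \<rho> y) \<and>
        (\<forall>r\<in>carrier R. \<forall>x\<in>carrier S. \<rho> (h r \<otimes>\<^bsub>S\<^esub> x) = r \<otimes>\<^bsub>R\<^esub> \<rho> x) \<and>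
        \<rho> \<one>\<^bsub>S\<^esub> = \<one>\<^bsub>R\<^esub>)"

end

theory Submission
  imports Defs
begin

text \<open>
  The composite \<open>R \<rightarrow> T/J\<close> splits iff some \<open>R\<close>-linear functional \<open>f\<close> on \<open>T\<close> vanishes on \<open>J\<close>
  and has \<open>f 1 = 1\<close>. Fix an \<open>R\<close>-basis of \<open>T\<close>. Because \<open>T/mT\<close> is Gorenstein, its socle generator
  is a multiple of every nonzero element, so a suitable coordinate functional \<open>\<lambda>\<close> makes the
  pairing \<open>(x, y) \<mapsto> \<lambda>(x y)\<close> nondegenerate modulo \<open>m\<close>. Over the local ring \<open>R\<close> its Gram matrix
  is then invertible (Gaussian elimination with unit pivots), so every functional is \<open>\<lambda>(t \<cdot>)\<close> for
  a unique \<open>t \<in> T\<close>. This functional vanishes on \<open>J\<close> iff \<open>t\<close> annihilates \<open>J\<close>, and \<open>\<lambda>(t) = 1\<close>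
  forces \<open>t \<notin> mT\<close>. Conversely, if \<open>t \<in> Ann J\<close> has a unit coordinate \<open>u\<close> at \<open>b\<close>, then
  \<open>x \<mapsto> u\<^sup>-\<^sup>1 \<cdot> coord (t x) b\<close> is a splitting.
\<close>

section \<open>Local and Artinian rings\<close>

lemma (in ring) exists_maximalideal_superset:
  assumes I: "ideal I R" and one: "\<one> \<notin> I"
  shows "\<exists>M. maximalideal M R \<and> I \<subseteq> M"
proof -
  define S where "S = {J. ideal J R \<and> I \<subseteq> J \<and> \<one> \<notin> J}"
  have "\<exists>M\<in>S. \<forall>Y\<in>S. M \<subseteq> Y \<longrightarrow> Y = M"
  proof (rule subset_Zorn)
    fix C assume C: "subset.chain S C"
    show "\<exists>U\<in>S. \<forall>Y\<in>C. Y \<subseteq> U"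
    proof (cases "C = {}")
      case True then show ?thesis using I one unfolding S_def by auto
    next
      case False
      have chain: "subset.chain {J. ideal J R} C" using C unfolding pred_on.chain_def S_def by auto
      have "ideal (\<Union>C) R" using chain_Union_is_ideal[OF chain] False by simp
      moreover have "I \<subseteq> \<Union>C" using False C unfolding pred_on.chain_def S_def by blast
      moreover have "\<one> \<notin> \<Union>C" using C unfolding pred_on.chain_def S_def by auto
      ultimately show ?thesis unfolding S_def by auto
    qed
  qed
  then obtain M where M: "M \<in> S" and M_max: "\<And>Y. Y \<in> S \<Longrightarrow> M \<subseteq> Y \<Longrightarrow> Y = M" by auto
  have "maximalideal M R"
  proof (rule maximalidealI)
    show "ideal M R" "carrier R \<noteq> M" using M S_def by auto
    fix J assume J: "ideal J R" "M \<subseteq> J" "J \<subseteq> carrier R"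
    show "J = M \<or> J = carrier R"
      using ideal.one_imp_carrier[OF J(1)] M_max[of J] J M unfolding S_def by auto
  qed
  then show ?thesis using M S_def by auto
qed

lemma (in cring) local_ringD:
  assumes "local_ring R n"
  shows "ideal n R" and "\<one> \<notin> n"
  using assms unfolding local_ring_def
  by (auto dest: maximalideal.axioms(1) maximalideal.I_notcarr ideal.one_imp_carrier)

lemma (in cring) local_ring_Units:
  assumes "local_ring R n" and x: "x \<in> carrier R" and "x \<notin> n"
  shows "x \<in> Units R"
proof (rule ccontr)
  assume not_unit: "x \<notin> Units R"
  have "\<one> \<notin> PIdl x"
  proof
    assume "\<one> \<in> PIdl x"
    then obtain y where "y \<in> carrier R" "\<one> = y \<otimes> x" unfolding cgenideal_def by auto
    then show False using not_unit x m_comm unfolding Units_def by auto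
  qed
  then obtain M where "maximalideal M R" "PIdl x \<subseteq> M"
    using exists_maximalideal_superset[OF cgenideal_ideal[OF x]] by auto
  then show False using assms cgenideal_self[OF x] unfolding local_ring_def by auto
qed

lemma (in ring) finsum_in_ideal:
  assumes I: "ideal I R" and "finite A" and "f \<in> A \<rightarrow> I"
  shows "(\<Oplus>a\<in>A. f a) \<in> I"
  using assms(2,3)
proof (induction A rule: finite_induct)
  case empty then show ?case using ideal.Icarr[OF I] additive_subgroup.zero_closed[OF ideal.axioms(1)[OF I]] by simp
next
  case (insert a A)
  then have "(\<Oplus>a\<in>insert a A. f a) = f a \<oplus> (\<Oplus>a\<in>A. f a)"
    using ideal.Icarr[OF I] by (intro finsum_insert) auto
  then show ?case using insert additive_subgroup.a_closed[OF ideal.axioms(1)[OF I]] by auto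
qed

lemma (in ring) artinian_no_strict_descent:
  assumes "artinian_ring R" and "\<And>k. ideal (I k) R" and "\<And>k. I (Suc k) \<subset> I k"
  shows False
proof -
  have "\<forall>k. ideal (I k) R \<and> I (Suc k) \<subseteq> I k" using assms(2,3) by (simp add: psubset_imp_subset)
  then obtain N where "\<forall>k\<ge>N. I k = I N" using assms(1) unfolding artinian_ring_def by blast
  then have "I (Suc N) = I N" using le_Suc_eq by blast
  then show False using assms(3)[of N] by simp
qed

lemma (in cring) artinian_ex_minimal_principal_ideal:
  assumes art: "artinian_ring R" and a: "a \<in> carrier R" "a \<noteq> \<zero>"
  shows "\<exists>w\<in>PIdl a. w \<noteq> \<zero> \<and> (\<forall>z\<in>carrier R. z \<otimes> w \<noteq> \<zero> \<longrightarrow> w \<in> PIdl (z \<otimes> w))"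
proof (rule ccontr)
  assume "\<not> ?thesis"
  then have "\<exists>z. z \<in> carrier R \<and> z \<otimes> w \<noteq> \<zero> \<and> w \<notin> PIdl (z \<otimes> w)"
    if "w \<in> PIdl a" "w \<noteq> \<zero>" for w
    using that by blast
  then obtain f where f: "\<And>w. w \<in> PIdl a \<Longrightarrow> w \<noteq> \<zero> \<Longrightarrow>
      f w \<in> carrier R \<and> f w \<otimes> w \<noteq> \<zero> \<and> w \<notin> PIdl (f w \<otimes> w)"
    by metis
  define w where "w k = ((\<lambda>v. f v \<otimes> v) ^^ k) a" for k
  have w: "w k \<in> PIdl a \<and> w k \<noteq> \<zero>" for k
  proof (induction k)
    case 0 then show ?case using cgenideal_self[OF a(1)] a unfolding w_def by simp
  next
    case (Suc k)
    then show ?case using f ideal.I_l_closed[OF cgenideal_ideal[OF a(1)]] unfolding w_def by auto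
  qed
  have w_carrier: "w k \<in> carrier R" for k
    using w[of k] ideal.Icarr[OF cgenideal_ideal[OF a(1)]] by blast
  have w_Suc: "w (Suc k) = f (w k) \<otimes> w k" for k unfolding w_def by simp
  show False
  proof (rule artinian_no_strict_descent[OF art])
    show "ideal (PIdl (w k)) R" for k using cgenideal_ideal[OF w_carrier] .
    show "PIdl (w (Suc k)) \<subset> PIdl (w k)" for k
    proof
      show "PIdl (w (Suc k)) \<subseteq> PIdl (w k)"
        using cgenideal_minimal[OF cgenideal_ideal[OF w_carrier]]
          ideal.I_l_closed[OF cgenideal_ideal[OF w_carrier] cgenideal_self[OF w_carrier]]
          f w w_Suc by metis
      show "PIdl (w (Suc k)) \<noteq> PIdl (w k)"
        using f w w_Suc cgenideal_self[OF w_carrier] by metis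
    qed
  qed
qed

lemma (in cring) minimal_principal_ideal_in_socle:
  assumes loc: "local_ring R n" and w: "w \<in> carrier R" "w \<noteq> \<zero>"
    and minimal: "\<And>z. z \<in> carrier R \<Longrightarrow> z \<otimes> w \<noteq> \<zero> \<Longrightarrow> w \<in> PIdl (z \<otimes> w)"
  shows "w \<in> socle R n"
  unfolding socle_def
proof safe
  show "w \<in> carrier R" by fact
  fix y assume y: "y \<in> n"
  have n: "ideal n R" "\<one> \<notin> n" using local_ringD[OF loc] .
  have y_carrier: "y \<in> carrier R" using ideal.Icarr[OF n(1) y] .
  show "w \<otimes> y = \<zero>"
  proof (rule ccontr)
    assume "w \<otimes> y \<noteq> \<zero>"
    then have "w \<in> PIdl (y \<otimes> w)" using minimal[OF y_carrier] y_carrier w m_comm by metis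
    then obtain z where z: "z \<in> carrier R" "w = z \<otimes> (y \<otimes> w)" unfolding cgenideal_def by auto
    have zy: "z \<otimes> y \<in> n" using ideal.I_l_closed[OF n(1) y z(1)] .
    have "\<one> \<ominus> z \<otimes> y \<notin> n"
    proof
      assume "\<one> \<ominus> z \<otimes> y \<in> n"
      then have "(\<one> \<ominus> z \<otimes> y) \<oplus> z \<otimes> y \<in> n"
        using zy additive_subgroup.a_closed[OF ideal.axioms(1)[OF n(1)]] by blast
      moreover have "(\<one> \<ominus> z \<otimes> y) \<oplus> z \<otimes> y = \<one>" using z y_carrier by algebra
      ultimately show False using n(2) by simp
    qed
    then have unit: "\<one> \<ominus> z \<otimes> y \<in> Units R" using local_ring_Units[OF loc] z y_carrier by simp
    \<comment> \<open>\<open>w = z y w\<close>, so the unit \<open>1 - z y\<close> kills \<open>w\<close>\<close>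
    have "(\<one> \<ominus> z \<otimes> y) \<otimes> w = w \<ominus> z \<otimes> (y \<otimes> w)" using z y_carrier w by algebra
    then have "(\<one> \<ominus> z \<otimes> y) \<otimes> w = \<zero>" using z(2)[symmetric] w by simp
    then have "w = \<zero>" using unit w by (metis Units_inv_closed Units_l_inv Units_closed l_one m_assoc r_null)
    then show False using w by simp
  qed
qed

lemma (in cring) socle_generator_in_cgenideal:
  assumes art: "artinian_ring R" and loc: "local_ring R n"
    and s: "s \<in> socle R n" and socle: "socle R n = {b \<otimes> s | b. b \<in> carrier R}"
    and a: "a \<in> carrier R" "a \<noteq> \<zero>"
  shows "s \<in> PIdl a"
proof -
  obtain w where w: "w \<in> PIdl a" "w \<noteq> \<zero>"
    and minimal: "\<And>z. z \<in> carrier R \<Longrightarrow> z \<otimes> w \<noteq> \<zero> \<Longrightarrow> w \<in> PIdl (z \<otimes> w)"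
    using artinian_ex_minimal_principal_ideal[OF art a] by blast
  have w_carrier: "w \<in> carrier R" using w(1) ideal.Icarr[OF cgenideal_ideal[OF a(1)]] by blast
  have s_carrier: "s \<in> carrier R" using s unfolding socle_def by auto
  have "w \<in> socle R n" using minimal_principal_ideal_in_socle[OF loc w_carrier w(2) minimal] .
  then obtain c where c: "c \<in> carrier R" "w = c \<otimes> s" using socle by auto
  have "c \<notin> n"
  proof
    assume "c \<in> n"
    then have "s \<otimes> c = \<zero>" using s unfolding socle_def by auto
    then show False using c w(2) m_comm s_carrier by simp
  qed
  then have c_unit: "c \<in> Units R" using local_ring_Units[OF loc c(1)] by simp
  have "s = inv c \<otimes> w" using c c_unit s_carrier by (simp add: m_assoc[symmetric])
  then show ?thesis
    using ideal.I_l_closed[OF cgenideal_ideal[OF a(1)] w(1)] c_unit by simp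
qed

section \<open>Linear systems over a local ring\<close>

definition (in ring) vec_mat :: "'i set \<Rightarrow> ('i \<Rightarrow> 'j \<Rightarrow> 'a) \<Rightarrow> ('i \<Rightarrow> 'a) \<Rightarrow> 'j \<Rightarrow> 'a"
  where "vec_mat I G x j = (\<Oplus>i\<in>I. x i \<otimes> G i j)"

definition (in ring) nondegenerate_mod :: "'a set \<Rightarrow> 'i set \<Rightarrow> 'j set \<Rightarrow> ('i \<Rightarrow> 'j \<Rightarrow> 'a) \<Rightarrow> bool"
  where "nondegenerate_mod m I J G \<longleftrightarrow>
    (\<forall>x \<in> I \<rightarrow> carrier R. (\<forall>j\<in>J. vec_mat I G x j \<in> m) \<longrightarrow> (\<forall>i\<in>I. x i \<in> m))"

lemma (in ring) vec_mat_closed: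
  assumes "x \<in> I \<rightarrow> carrier R" and "\<And>i. i \<in> I \<Longrightarrow> G i j \<in> carrier R"
  shows "vec_mat I G x j \<in> carrier R"
  unfolding vec_mat_def using assms by (intro finsum_closed) auto

lemma (in ring) vec_mat_cong:
  assumes "\<And>i. i \<in> I \<Longrightarrow> x i = y i" and "y \<in> I \<rightarrow> carrier R"
    and "\<And>i. i \<in> I \<Longrightarrow> G i j \<in> carrier R"
  shows "vec_mat I G x j = vec_mat I G y j"
  unfolding vec_mat_def using assms by (intro finsum_cong') auto

lemma (in ring) nondegenerate_mod_pivot:
  assumes m: "ideal m R" "\<one> \<notin> m" and nd: "nondegenerate_mod m I J G"
    and G: "\<And>i j. i \<in> I \<Longrightarrow> j \<in> J \<Longrightarrow> G i j \<in> carrier R"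
    and I: "finite I" "i0 \<in> I"
  shows "\<exists>j0\<in>J. G i0 j0 \<notin> m"
proof (rule ccontr)
  assume no_pivot: "\<not> ?thesis"
  define e where "e i = (if i = i0 then \<one> else \<zero>)" for i
  have e: "e \<in> I \<rightarrow> carrier R" unfolding e_def by auto
  have "vec_mat I G e j = G i0 j" if "j \<in> J" for j
  proof -
    have "vec_mat I G e j = (\<Oplus>i\<in>I. if i = i0 then G i j else \<zero>)"
      unfolding vec_mat_def e_def using G that by (intro finsum_cong') auto
    then show ?thesis using add.finprod_singleton_swap[of i0 I "\<lambda>i. G i j"] I G that by auto
  qed
  then have "\<forall>j\<in>J. vec_mat I G e j \<in> m" using no_pivot by simp
  then have "\<forall>i\<in>I. e i \<in> m" using nd e unfolding nondegenerate_mod_def by blast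
  then show False using I(2) m(2) unfolding e_def by auto
qed

locale pivot = cring R for R (structure) +
  fixes I :: "'i set" and J :: "'j set" and G :: "'i \<Rightarrow> 'j \<Rightarrow> 'a" and i0 :: 'i and j0 :: 'j
  assumes finite_rows: "finite I"
    and entries_closed: "\<And>i j. i \<in> I \<Longrightarrow> j \<in> J \<Longrightarrow> G i j \<in> carrier R"
    and pivot_row: "i0 \<in> I" and pivot_col: "j0 \<in> J" and pivot_unit: "G i0 j0 \<in> Units R"
begin

definition schur :: "'i \<Rightarrow> 'j \<Rightarrow> 'a"
  where "schur i j = G i j \<ominus> G i j0 \<otimes> inv (G i0 j0) \<otimes> G i0 j"

text \<open>The unique extension of a vector on \<open>I - {i0}\<close> whose combination of the pivot column vanishes.\<close>
definition lift :: "('i \<Rightarrow> 'a) \<Rightarrow> 'i \<Rightarrow> 'a"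
  where "lift x = x(i0 := \<ominus> (vec_mat (I - {i0}) G x j0 \<otimes> inv (G i0 j0)))"

lemma pivot_inv: "inv (G i0 j0) \<in> carrier R" "inv (G i0 j0) \<otimes> G i0 j0 = \<one>" "G i0 j0 \<otimes> inv (G i0 j0) = \<one>"
  using pivot_unit by auto

lemma schur_closed: "i \<in> I \<Longrightarrow> j \<in> J \<Longrightarrow> schur i j \<in> carrier R"
  unfolding schur_def using entries_closed pivot_row pivot_col pivot_inv by simp

lemma vec_mat_rest_closed: "x \<in> I - {i0} \<rightarrow> carrier R \<Longrightarrow> j \<in> J \<Longrightarrow> vec_mat (I - {i0}) G x j \<in> carrier R"
  using entries_closed by (intro vec_mat_closed) auto

lemma vec_mat_split:
  assumes "x \<in> I \<rightarrow> carrier R" and "j \<in> J"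
  shows "vec_mat I G x j = x i0 \<otimes> G i0 j \<oplus> vec_mat (I - {i0}) G x j"
proof -
  have "I = insert i0 (I - {i0})" using pivot_row by auto
  then have "vec_mat I G x j = vec_mat (insert i0 (I - {i0})) G x j" by simp
  also have "\<dots> = x i0 \<otimes> G i0 j \<oplus> vec_mat (I - {i0}) G x j"
    unfolding vec_mat_def using assms finite_rows pivot_row entries_closed by (intro finsum_insert) auto
  finally show ?thesis .
qed

lemma vec_mat_update_pivot:
  assumes x: "x \<in> I \<rightarrow> carrier R" and c: "c \<in> carrier R" and j: "j \<in> J"
  shows "vec_mat I G (x(i0 := x i0 \<oplus> c)) j = vec_mat I G x j \<oplus> c \<otimes> G i0 j"
proof -
  have "vec_mat (I - {i0}) G (x(i0 := x i0 \<oplus> c)) j = vec_mat (I - {i0}) G x j"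
    using x j entries_closed by (intro vec_mat_cong) auto
  moreover have "x(i0 := x i0 \<oplus> c) \<in> I \<rightarrow> carrier R" using x c pivot_row by (auto simp: Pi_iff)
  moreover have "x i0 \<in> carrier R" "G i0 j \<in> carrier R" "vec_mat (I - {i0}) G x j \<in> carrier R"
    using x pivot_row entries_closed[OF pivot_row j] vec_mat_rest_closed[OF _ j, of x] by auto
  ultimately show ?thesis
    using vec_mat_split[OF _ j, of "x(i0 := x i0 \<oplus> c)"] vec_mat_split[OF x j] c by simp algebra
qed

lemma vec_mat_schur:
  assumes x: "x \<in> I - {i0} \<rightarrow> carrier R" and j: "j \<in> J"
  shows "vec_mat (I - {i0}) schur x j
    = vec_mat (I - {i0}) G x j \<ominus> vec_mat (I - {i0}) G x j0 \<otimes> inv (G i0 j0) \<otimes> G i0 j"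
proof -
  define c where "c = \<ominus> (inv (G i0 j0) \<otimes> G i0 j)"
  have c_closed: "c \<in> carrier R" unfolding c_def using pivot_inv entries_closed pivot_row j by simp
  have "x i \<otimes> schur i j = x i \<otimes> G i j \<oplus> (x i \<otimes> G i j0) \<otimes> c" if i: "i \<in> I - {i0}" for i
  proof -
    have "x i \<in> carrier R" "G i j \<in> carrier R" "G i j0 \<in> carrier R" "G i0 j \<in> carrier R"
      using x i j pivot_col pivot_row entries_closed by auto
    then show ?thesis unfolding schur_def c_def using pivot_inv(1) by algebra
  qed
  then have "vec_mat (I - {i0}) schur x j = (\<Oplus>i\<in>I - {i0}. x i \<otimes> G i j \<oplus> (x i \<otimes> G i j0) \<otimes> c)"
    unfolding vec_mat_def using x j pivot_col entries_closed c_closed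
    by (intro finsum_cong') (auto simp: Pi_iff)
  also have "\<dots> = vec_mat (I - {i0}) G x j \<oplus> vec_mat (I - {i0}) G x j0 \<otimes> c"
    unfolding vec_mat_def using x j pivot_col entries_closed c_closed finite_rows
    by (simp add: finsum_ldistr Pi_iff)
  finally show ?thesis
    unfolding c_def using vec_mat_rest_closed[OF x] j pivot_col pivot_row pivot_inv entries_closed
    by simp algebra
qed

lemma lift_closed: "x \<in> I - {i0} \<rightarrow> carrier R \<Longrightarrow> lift x \<in> I \<rightarrow> carrier R"
  unfolding lift_def using vec_mat_rest_closed pivot_col pivot_inv by auto

lemma vec_mat_lift:
  assumes x: "x \<in> I - {i0} \<rightarrow> carrier R" and j: "j \<in> J"
  shows "vec_mat I G (lift x) j = vec_mat (I - {i0}) schur x j"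
proof -
  have "vec_mat (I - {i0}) G (lift x) j = vec_mat (I - {i0}) G x j"
    unfolding lift_def using x j entries_closed by (intro vec_mat_cong) auto
  then show ?thesis
    using vec_mat_split[OF lift_closed[OF x] j] vec_mat_schur[OF x j] vec_mat_rest_closed[OF x]
      j pivot_col pivot_row pivot_inv entries_closed
    unfolding lift_def by simp algebra
qed

lemma vec_mat_lift_pivot_col:
  assumes x: "x \<in> I - {i0} \<rightarrow> carrier R"
  shows "vec_mat I G (lift x) j0 = \<zero>"
proof -
  have "vec_mat (I - {i0}) G (lift x) j0 = vec_mat (I - {i0}) G x j0"
    unfolding lift_def using x pivot_col entries_closed by (intro vec_mat_cong) auto
  then show ?thesis
    using vec_mat_split[OF lift_closed[OF x] pivot_col] vec_mat_rest_closed[OF x pivot_col] pivot_inv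
      entries_closed[OF pivot_row pivot_col]
    unfolding lift_def by (simp add: l_minus m_assoc l_neg)
qed

lemma lift_eq:
  assumes x: "x \<in> I \<rightarrow> carrier R" and "vec_mat I G x j0 = \<zero>"
  shows "lift x = x"
proof -
  have x_rest: "x \<in> I - {i0} \<rightarrow> carrier R" using x by auto
  have x0: "x i0 \<in> carrier R" using x pivot_row by auto
  have "x i0 \<otimes> G i0 j0 = \<ominus> vec_mat (I - {i0}) G x j0"
    using assms vec_mat_split[OF x pivot_col] vec_mat_rest_closed[OF x_rest pivot_col] x0
      entries_closed[OF pivot_row pivot_col]
    by (metis m_closed minus_equality)
  then have "x i0 = \<ominus> (vec_mat (I - {i0}) G x j0 \<otimes> inv (G i0 j0))"
    using x0 pivot_inv vec_mat_rest_closed[OF x_rest pivot_col] entries_closed[OF pivot_row pivot_col]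
    by (metis l_minus m_assoc r_one)
  then show ?thesis unfolding lift_def by auto
qed

lemma schur_nondegenerate_mod:
  assumes m: "ideal m R" and nd: "nondegenerate_mod m I J G"
  shows "nondegenerate_mod m (I - {i0}) (J - {j0}) schur"
  unfolding nondegenerate_mod_def
proof (intro ballI impI)
  fix x i assume x: "x \<in> I - {i0} \<rightarrow> carrier R"
    and small: "\<forall>j\<in>J - {j0}. vec_mat (I - {i0}) schur x j \<in> m" and i: "i \<in> I - {i0}"
  have "vec_mat I G (lift x) j \<in> m" if j: "j \<in> J" for j
  proof (cases "j = j0")
    case True
    then show ?thesis
      using vec_mat_lift_pivot_col[OF x] additive_subgroup.zero_closed[OF ideal.axioms(1)[OF m]] by simp
  next
    case False
    then show ?thesis using vec_mat_lift[OF x j] small j by simp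
  qed
  then have "lift x i \<in> m" using nd lift_closed[OF x] i unfolding nondegenerate_mod_def by blast
  then show "x i \<in> m" using i unfolding lift_def by simp
qed

lemma surjective_if_schur_surjective:
  assumes schur_surj: "\<forall>y \<in> J - {j0} \<rightarrow> carrier R. \<exists>x \<in> I - {i0} \<rightarrow> carrier R.
      \<forall>j\<in>J - {j0}. vec_mat (I - {i0}) schur x j = y j"
    and y: "y \<in> J \<rightarrow> carrier R"
  shows "\<exists>x \<in> I \<rightarrow> carrier R. \<forall>j\<in>J. vec_mat I G x j = y j"
proof -
  define c where "c = y j0 \<otimes> inv (G i0 j0)"
  have c: "c \<in> carrier R" unfolding c_def using y pivot_col pivot_inv by auto
  \<comment> \<open>solve the Schur system, then correct the pivot entry to get the pivot column right\<close>
  obtain x where x: "x \<in> I - {i0} \<rightarrow> carrier R"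
    and x_sol: "\<And>j. j \<in> J - {j0} \<Longrightarrow> vec_mat (I - {i0}) schur x j = y j \<ominus> c \<otimes> G i0 j"
    using schur_surj[rule_format, of "\<lambda>j. y j \<ominus> c \<otimes> G i0 j"] y c entries_closed pivot_row by fastforce
  define x' where "x' = (lift x)(i0 := lift x i0 \<oplus> c)"
  show ?thesis
  proof (intro bexI ballI)
    show "x' \<in> I \<rightarrow> carrier R" unfolding x'_def using lift_closed[OF x] c pivot_row by (auto simp: Pi_iff)
    fix j assume j: "j \<in> J"
    have yj: "y j \<in> carrier R" "c \<otimes> G i0 j \<in> carrier R" using y j c entries_closed pivot_row by auto
    have "vec_mat I G x' j = vec_mat I G (lift x) j \<oplus> c \<otimes> G i0 j"
      unfolding x'_def using vec_mat_update_pivot[OF lift_closed[OF x] c j] .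
    also have "\<dots> = y j"
    proof (cases "j = j0")
      case True
      have "y j0 \<in> carrier R" using y pivot_col by auto
      then show ?thesis unfolding c_def using vec_mat_lift_pivot_col[OF x] True pivot_inv
          entries_closed[OF pivot_row pivot_col]
        by (simp add: m_assoc)
    next
      case False
      then show ?thesis using vec_mat_lift[OF x j] x_sol[of j] j yj by (simp add: a_minus_def a_assoc l_neg)
    qed
    finally show "vec_mat I G x' j = y j" .
  qed
qed

lemma injective_if_schur_injective:
  assumes schur_inj: "\<forall>x \<in> I - {i0} \<rightarrow> carrier R.
      (\<forall>j\<in>J - {j0}. vec_mat (I - {i0}) schur x j = \<zero>) \<longrightarrow> (\<forall>i\<in>I - {i0}. x i = \<zero>)"
    and x: "x \<in> I \<rightarrow> carrier R" and zero: "\<forall>j\<in>J. vec_mat I G x j = \<zero>"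
  shows "\<forall>i\<in>I. x i = \<zero>"
proof -
  have x_rest: "x \<in> I - {i0} \<rightarrow> carrier R" using x by auto
  have lift_x: "lift x = x" using lift_eq[OF x] zero pivot_col by simp
  have "\<forall>j\<in>J - {j0}. vec_mat (I - {i0}) schur x j = \<zero>"
    using vec_mat_lift[OF x_rest] lift_x zero by auto
  then have rest: "\<forall>i\<in>I - {i0}. x i = \<zero>" using schur_inj x_rest by blast
  then have "vec_mat (I - {i0}) G x j0 = (\<Oplus>i\<in>I - {i0}. \<zero>)"
    unfolding vec_mat_def using entries_closed pivot_col by (intro finsum_cong') auto
  then have "vec_mat (I - {i0}) G x j0 = \<zero>" by simp
  then have "x i0 = \<zero>" using fun_cong[OF lift_x, of i0] pivot_inv unfolding lift_def by simp
  then show ?thesis using rest by blast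
qed

end

lemma (in cring) nondegenerate_mod_bijective:
  assumes loc: "local_ring R m"
  shows "finite I \<Longrightarrow> finite J \<Longrightarrow> card I = card J \<Longrightarrow>
    (\<And>i j. i \<in> I \<Longrightarrow> j \<in> J \<Longrightarrow> G i j \<in> carrier R) \<Longrightarrow> nondegenerate_mod m I J G \<Longrightarrow>
    (\<forall>y \<in> J \<rightarrow> carrier R. \<exists>x \<in> I \<rightarrow> carrier R. \<forall>j\<in>J. vec_mat I G x j = y j) \<and>
    (\<forall>x \<in> I \<rightarrow> carrier R. (\<forall>j\<in>J. vec_mat I G x j = \<zero>) \<longrightarrow> (\<forall>i\<in>I. x i = \<zero>))"
proof (induction "card I" arbitrary: I J G)
  case 0
  then show ?case by auto
next
  case (Suc k)
  have m: "ideal m R" "\<one> \<notin> m" using local_ringD[OF loc] .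
  obtain i0 where i0: "i0 \<in> I" using Suc.hyps(2) by (metis card.empty ex_in_conv nat.distinct(1))
  obtain j0 where j0: "j0 \<in> J" "G i0 j0 \<notin> m"
    using nondegenerate_mod_pivot[OF m Suc.prems(5,4,1) i0] by blast
  interpret pivot R I J G i0 j0
    using Suc.prems local_ring_Units[OF loc] i0 j0 by unfold_locales auto
  have "finite (I - {i0})" "finite (J - {j0})" "card (I - {i0}) = card (J - {j0})"
    using Suc.prems(1-3) i0 j0 by auto
  moreover have "k = card (I - {i0})" using Suc.hyps(2) Suc.prems(1) i0 by simp
  ultimately have schur_bij:
    "(\<forall>y \<in> J - {j0} \<rightarrow> carrier R. \<exists>x \<in> I - {i0} \<rightarrow> carrier R.
        \<forall>j\<in>J - {j0}. vec_mat (I - {i0}) schur x j = y j) \<and>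
     (\<forall>x \<in> I - {i0} \<rightarrow> carrier R.
        (\<forall>j\<in>J - {j0}. vec_mat (I - {i0}) schur x j = \<zero>) \<longrightarrow> (\<forall>i\<in>I - {i0}. x i = \<zero>))"
    using schur_closed schur_nondegenerate_mod[OF m(1) Suc.prems(5)] by (intro Suc.hyps(1)) auto
  then show ?case
    using surjective_if_schur_surjective injective_if_schur_injective by simp
qed

section \<open>Linear functionals and splittings\<close>

definition linear_functional :: "('a, 'm) ring_scheme \<Rightarrow> ('b, 'n) ring_scheme \<Rightarrow> ('a \<Rightarrow> 'b) \<Rightarrow> ('b \<Rightarrow> 'a) \<Rightarrow> bool"
  where "linear_functional R T \<phi> f \<longleftrightarrow> f \<in> carrier T \<rightarrow> carrier R \<and>
    (\<forall>x\<in>carrier T. \<forall>y\<in>carrier T. f (x \<oplus>\<^bsub>T\<^esub> y) = f x \<oplus>\<^bsub>R\<^esub> f y) \<and>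
    (\<forall>r\<in>carrier R. \<forall>x\<in>carrier T. f (\<phi> r \<otimes>\<^bsub>T\<^esub> x) = r \<otimes>\<^bsub>R\<^esub> f x)"

lemma (in ring) FactRing_carrier: "carrier (R Quot I) = (+>) I ` carrier R"
  unfolding FactRing_def A_RCOSETS_def' by auto

context ring_hom_cring
begin

lemma linear_functionalD:
  assumes "linear_functional R S h f"
  shows "x \<in> carrier S \<Longrightarrow> f x \<in> carrier R"
    and "x \<in> carrier S \<Longrightarrow> y \<in> carrier S \<Longrightarrow> f (x \<oplus>\<^bsub>S\<^esub> y) = f x \<oplus> f y"
    and "r \<in> carrier R \<Longrightarrow> x \<in> carrier S \<Longrightarrow> f (h r \<otimes>\<^bsub>S\<^esub> x) = r \<otimes> f x"
  using assms unfolding linear_functional_def by auto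

lemma linear_functional_zero:
  assumes "linear_functional R S h f"
  shows "f \<zero>\<^bsub>S\<^esub> = \<zero>"
proof -
  have "f \<zero>\<^bsub>S\<^esub> \<oplus> f \<zero>\<^bsub>S\<^esub> = f \<zero>\<^bsub>S\<^esub>"
    using linear_functionalD(2)[OF assms S.zero_closed S.zero_closed] by simp
  then show ?thesis using linear_functionalD(1)[OF assms S.zero_closed] by (metis R.add.r_cancel_one')
qed

lemma linear_functional_minus:
  assumes "linear_functional R S h f" and x: "x \<in> carrier S"
  shows "f (\<ominus>\<^bsub>S\<^esub> x) = \<ominus> f x"
proof -
  have "f (\<ominus>\<^bsub>S\<^esub> x) \<oplus> f x = f (\<ominus>\<^bsub>S\<^esub> x \<oplus>\<^bsub>S\<^esub> x)"
    using linear_functionalD(2)[OF assms(1) S.a_inv_closed[OF x] x] by simp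
  also have "\<dots> = \<zero>" using linear_functional_zero[OF assms(1)] S.l_neg[OF x] by simp
  finally have "f (\<ominus>\<^bsub>S\<^esub> x) \<oplus> f x = \<zero>" .
  then show ?thesis using linear_functionalD(1)[OF assms(1)] x by (simp add: R.minus_equality)
qed

lemma linear_functional_finsum:
  assumes f: "linear_functional R S h f" and "finite A" and "g \<in> A \<rightarrow> carrier S"
  shows "f (\<Oplus>\<^bsub>S\<^esub> a\<in>A. g a) = (\<Oplus>a\<in>A. f (g a))"
  using assms(2,3)
proof (induction A rule: finite_induct)
  case empty then show ?case using linear_functional_zero[OF f] by simp
next
  case (insert a A)
  then have "f (\<Oplus>\<^bsub>S\<^esub> a\<in>insert a A. g a) = f (g a) \<oplus> f (\<Oplus>\<^bsub>S\<^esub> a\<in>A. g a)"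
    using linear_functionalD(2)[OF f] by simp
  also have "\<dots> = (\<Oplus>a\<in>insert a A. f (g a))"
    using insert linear_functionalD(1)[OF f] by (simp add: Pi_iff)
  finally show ?case .
qed

lemma linear_functional_mult:
  assumes f: "linear_functional R S h f" and t: "t \<in> carrier S"
  shows "linear_functional R S h (\<lambda>z. f (t \<otimes>\<^bsub>S\<^esub> z))"
proof -
  have "t \<otimes>\<^bsub>S\<^esub> (h r \<otimes>\<^bsub>S\<^esub> x) = h r \<otimes>\<^bsub>S\<^esub> (t \<otimes>\<^bsub>S\<^esub> x)"
    if "r \<in> carrier R" "x \<in> carrier S" for r x
    using that t by (simp add: S.m_lcomm)
  then show ?thesis using linear_functionalD[OF f] t unfolding linear_functional_def
    by (simp add: S.r_distr)
qed

lemma linear_functional_scale: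
  assumes f: "linear_functional R S h f" and r: "r \<in> carrier R"
  shows "linear_functional R S h (\<lambda>z. r \<otimes> f z)"
  using linear_functionalD[OF f] r unfolding linear_functional_def
  by (simp add: R.r_distr R.m_lcomm)

lemma linear_functional_coset_eq:
  assumes f: "linear_functional R S h f" and J: "ideal J S" and f_J: "\<forall>q\<in>J. f q = \<zero>"
    and x: "x \<in> carrier S" "x' \<in> carrier S" and coset: "J +>\<^bsub>S\<^esub> x = J +>\<^bsub>S\<^esub> x'"
  shows "f x = f x'"
proof -
  have "x \<ominus>\<^bsub>S\<^esub> x' \<in> J" using S.quotient_eq_iff_same_a_r_cos[OF J x] coset by simp
  moreover have "x = (x \<ominus>\<^bsub>S\<^esub> x') \<oplus>\<^bsub>S\<^esub> x'" using x by algebra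
  ultimately show ?thesis
    using linear_functionalD(2)[OF f] f_J x linear_functionalD(1)[OF f] by (metis S.minus_closed R.l_zero)
qed

lemma linear_functional_if_splits:
  assumes J: "ideal J S" and split: "splits R (S Quot J) (\<lambda>r. J +>\<^bsub>S\<^esub> h r)"
  shows "\<exists>f. linear_functional R S h f \<and> (\<forall>q\<in>J. f q = \<zero>) \<and> f \<one>\<^bsub>S\<^esub> = \<one>"
proof -
  have quot: "(+>\<^bsub>S\<^esub>) J \<in> ring_hom S (S Quot J)" using ideal.rcos_ring_hom[OF J] .
  obtain \<rho> where \<rho>: "\<rho> \<in> carrier (S Quot J) \<rightarrow> carrier R"
    "\<forall>x\<in>carrier (S Quot J). \<forall>y\<in>carrier (S Quot J). \<rho> (x \<oplus>\<^bsub>S Quot J\<^esub> y) = \<rho> x \<oplus> \<rho> y"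
    "\<forall>r\<in>carrier R. \<forall>x\<in>carrier (S Quot J). \<rho> ((J +>\<^bsub>S\<^esub> h r) \<otimes>\<^bsub>S Quot J\<^esub> x) = r \<otimes> \<rho> x"
    "\<rho> \<one>\<^bsub>S Quot J\<^esub> = \<one>"
    using split unfolding splits_def by blast
  have f: "linear_functional R S h (\<lambda>x. \<rho> (J +>\<^bsub>S\<^esub> x))"
    unfolding linear_functional_def
    using \<rho>(1-3) S.FactRing_carrier ring_hom_add[OF quot] ring_hom_mult[OF quot] by auto
  moreover have "\<forall>q\<in>J. \<rho> (J +>\<^bsub>S\<^esub> q) = \<zero>"
    using linear_functional_zero[OF f] S.a_rcos_zero[OF J] J
    by (metis additive_subgroup.zero_closed ideal.axioms(1))
  moreover have "\<rho> (J +>\<^bsub>S\<^esub> \<one>\<^bsub>S\<^esub>) = \<one>" using \<rho>(4) unfolding FactRing_def by simp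
  ultimately show ?thesis by blast
qed

lemma splits_if_linear_functional:
  assumes J: "ideal J S" and f: "linear_functional R S h f"
    and f_J: "\<forall>q\<in>J. f q = \<zero>" and f_one: "f \<one>\<^bsub>S\<^esub> = \<one>"
  shows "splits R (S Quot J) (\<lambda>r. J +>\<^bsub>S\<^esub> h r)"
proof -
  have quot: "(+>\<^bsub>S\<^esub>) J \<in> ring_hom S (S Quot J)" using ideal.rcos_ring_hom[OF J] .
  have quot_one: "\<one>\<^bsub>S Quot J\<^esub> = J +>\<^bsub>S\<^esub> \<one>\<^bsub>S\<^esub>" unfolding FactRing_def by simp
  define \<rho> where "\<rho> Y = f (SOME x. x \<in> carrier S \<and> Y = J +>\<^bsub>S\<^esub> x)" for Y
  have \<rho>_coset: "\<rho> (J +>\<^bsub>S\<^esub> x) = f x" if x: "x \<in> carrier S" for x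
  proof -
    have "\<exists>x'. x' \<in> carrier S \<and> J +>\<^bsub>S\<^esub> x = J +>\<^bsub>S\<^esub> x'" using x by blast
    then have "(SOME x'. x' \<in> carrier S \<and> J +>\<^bsub>S\<^esub> x = J +>\<^bsub>S\<^esub> x') \<in> carrier S \<and>
        J +>\<^bsub>S\<^esub> x = J +>\<^bsub>S\<^esub> (SOME x'. x' \<in> carrier S \<and> J +>\<^bsub>S\<^esub> x = J +>\<^bsub>S\<^esub> x')"
      by (rule someI_ex)
    then show ?thesis
      unfolding \<rho>_def using linear_functional_coset_eq[OF f J f_J x] by metis
  qed
  show ?thesis
    unfolding splits_def S.FactRing_carrier
    using \<rho>_coset linear_functionalD[OF f] f_one quot_one
      ring_hom_add[OF quot, symmetric] ring_hom_mult[OF quot, symmetric]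
    by (intro exI[of _ \<rho>]) auto
qed

lemma splits_iff_linear_functional:
  assumes "ideal J S"
  shows "splits R (S Quot J) (\<lambda>r. J +>\<^bsub>S\<^esub> h r) \<longleftrightarrow>
    (\<exists>f. linear_functional R S h f \<and> (\<forall>q\<in>J. f q = \<zero>) \<and> f \<one>\<^bsub>S\<^esub> = \<one>)"
  using linear_functional_if_splits[OF assms] splits_if_linear_functional[OF assms] by blast

end

section \<open>Coordinates with respect to a free basis\<close>

locale free_basis = ring_hom_cring R T \<phi> for R (structure) and T (structure) and \<phi> +
  fixes B
  assumes finite_basis: "finite B" and basis_closed: "B \<subseteq> carrier T"
    and unique_coords: "\<And>t. t \<in> carrier T \<Longrightarrow>
      \<exists>!c. c \<in> B \<rightarrow>\<^sub>E carrier R \<and> t = (\<Oplus>\<^bsub>T\<^esub> b\<in>B. \<phi> (c b) \<otimes>\<^bsub>T\<^esub> b)"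
begin

definition lincomb
  where "lincomb c = (\<Oplus>\<^bsub>T\<^esub> b\<in>B. \<phi> (c b) \<otimes>\<^bsub>T\<^esub> b)"

definition coord
  where "coord t = (THE c. c \<in> B \<rightarrow>\<^sub>E carrier R \<and> t = lincomb c)"

lemma basis_carrier: "b \<in> B \<Longrightarrow> b \<in> carrier T"
  using basis_closed by auto

lemma lincomb_closed: "c \<in> B \<rightarrow> carrier R \<Longrightarrow> lincomb c \<in> carrier T"
  unfolding lincomb_def using basis_carrier by (intro S.finsum_closed) auto

lemma coord_closed: "t \<in> carrier T \<Longrightarrow> coord t \<in> B \<rightarrow>\<^sub>E carrier R"
  and lincomb_coord: "t \<in> carrier T \<Longrightarrow> lincomb (coord t) = t"
proof -
  assume t: "t \<in> carrier T"
  have "coord t \<in> B \<rightarrow>\<^sub>E carrier R \<and> t = lincomb (coord t)"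
    unfolding coord_def using unique_coords[OF t] unfolding lincomb_def[symmetric] by (rule theI')
  then show "coord t \<in> B \<rightarrow>\<^sub>E carrier R" "lincomb (coord t) = t" by auto
qed

lemma coord_lincomb:
  assumes c: "c \<in> B \<rightarrow> carrier R" and b: "b \<in> B"
  shows "coord (lincomb c) b = c b"
proof -
  have lincomb_restrict: "lincomb (restrict c B) = lincomb c"
    unfolding lincomb_def using c basis_carrier by (intro S.finsum_cong') auto
  have "\<exists>!d. d \<in> B \<rightarrow>\<^sub>E carrier R \<and> lincomb c = lincomb d"
    using unique_coords[OF lincomb_closed[OF c]] unfolding lincomb_def .
  then have "coord (lincomb c) = restrict c B"
    using coord_closed lincomb_coord lincomb_closed[OF c] lincomb_restrict c by (metis restrict_PiE)
  then show ?thesis using b by simp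
qed

lemma lincomb_add:
  assumes c: "c \<in> B \<rightarrow> carrier R" and d: "d \<in> B \<rightarrow> carrier R"
  shows "lincomb (\<lambda>b. c b \<oplus> d b) = lincomb c \<oplus>\<^bsub>T\<^esub> lincomb d"
proof -
  have "lincomb (\<lambda>b. c b \<oplus> d b)
      = (\<Oplus>\<^bsub>T\<^esub> b\<in>B. \<phi> (c b) \<otimes>\<^bsub>T\<^esub> b \<oplus>\<^bsub>T\<^esub> \<phi> (d b) \<otimes>\<^bsub>T\<^esub> b)"
    unfolding lincomb_def using c d basis_carrier by (intro S.finsum_cong') (auto simp: S.l_distr Pi_iff)
  also have "\<dots> = lincomb c \<oplus>\<^bsub>T\<^esub> lincomb d"
    unfolding lincomb_def using c d basis_carrier by (intro S.finsum_addf) auto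
  finally show ?thesis .
qed

lemma lincomb_smult:
  assumes r: "r \<in> carrier R" and c: "c \<in> B \<rightarrow> carrier R"
  shows "lincomb (\<lambda>b. r \<otimes> c b) = \<phi> r \<otimes>\<^bsub>T\<^esub> lincomb c"
proof -
  have "lincomb (\<lambda>b. r \<otimes> c b) = (\<Oplus>\<^bsub>T\<^esub> b\<in>B. \<phi> r \<otimes>\<^bsub>T\<^esub> (\<phi> (c b) \<otimes>\<^bsub>T\<^esub> b))"
    unfolding lincomb_def using c r basis_carrier by (intro S.finsum_cong') (auto simp: S.m_assoc Pi_iff)
  also have "\<dots> = \<phi> r \<otimes>\<^bsub>T\<^esub> lincomb c"
    unfolding lincomb_def using c r basis_carrier finite_basis by (intro S.finsum_rdistr[symmetric]) auto
  finally show ?thesis .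
qed

lemma linear_functional_coord:
  assumes b: "b \<in> B"
  shows "linear_functional R T \<phi> (\<lambda>t. coord t b)"
  unfolding linear_functional_def
proof (intro conjI ballI funcsetI)
  show "coord t b \<in> carrier R" if "t \<in> carrier T" for t using coord_closed[OF that] b by auto
  fix x y assume x: "x \<in> carrier T" and y: "y \<in> carrier T"
  have cx: "coord x \<in> B \<rightarrow> carrier R" and cy: "coord y \<in> B \<rightarrow> carrier R"
    using coord_closed x y by auto
  show "coord (x \<oplus>\<^bsub>T\<^esub> y) b = coord x b \<oplus> coord y b"
    using lincomb_add[OF cx cy] coord_lincomb[of "\<lambda>b. coord x b \<oplus> coord y b" b] lincomb_coord x y cx cy b
    by (auto simp: Pi_iff)
next
  fix r x assume r: "r \<in> carrier R" and x: "x \<in> carrier T"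
  have cx: "coord x \<in> B \<rightarrow> carrier R" using coord_closed x by auto
  show "coord (\<phi> r \<otimes>\<^bsub>T\<^esub> x) b = r \<otimes> coord x b"
    using lincomb_smult[OF r cx] coord_lincomb[of "\<lambda>b. r \<otimes> coord x b" b] lincomb_coord x r cx b
    by (auto simp: Pi_iff)
qed

lemma linear_functional_lincomb:
  assumes f: "linear_functional R T \<phi> f" and c: "c \<in> B \<rightarrow> carrier R"
  shows "f (lincomb c) = (\<Oplus>b\<in>B. c b \<otimes> f b)"
  unfolding lincomb_def
  using linear_functional_finsum[OF f finite_basis] linear_functionalD(1,3)[OF f] c basis_carrier
  by (auto simp: Pi_iff intro!: R.finsum_cong')

lemma linear_functional_expand:
  assumes f: "linear_functional R T \<phi> f" and z: "z \<in> carrier T"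
  shows "f z = (\<Oplus>b\<in>B. coord z b \<otimes> f b)"
  using linear_functional_lincomb[OF f, of "coord z"] lincomb_coord[OF z] coord_closed[OF z] by auto

lemma coord_mult_lincomb:
  assumes x: "x \<in> B \<rightarrow> carrier R" and z: "z \<in> carrier T" and b: "b \<in> B"
  shows "coord (lincomb x \<otimes>\<^bsub>T\<^esub> z) b = R.vec_mat B (\<lambda>i j. coord (i \<otimes>\<^bsub>T\<^esub> j) b) x z"
proof -
  have f: "linear_functional R T \<phi> (\<lambda>w. coord (z \<otimes>\<^bsub>T\<^esub> w) b)"
    using linear_functional_mult[OF linear_functional_coord[OF b] z] .
  have "coord (lincomb x \<otimes>\<^bsub>T\<^esub> z) b = coord (z \<otimes>\<^bsub>T\<^esub> lincomb x) b"
    using lincomb_closed[OF x] z by (simp add: S.m_comm)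
  also have "\<dots> = (\<Oplus>i\<in>B. x i \<otimes> coord (z \<otimes>\<^bsub>T\<^esub> i) b)"
    using linear_functional_lincomb[OF f x] .
  also have "\<dots> = R.vec_mat B (\<lambda>i j. coord (i \<otimes>\<^bsub>T\<^esub> j) b) x z"
    unfolding R.vec_mat_def using x z basis_carrier b coord_closed
    by (intro R.finsum_cong') (auto simp: S.m_comm Pi_iff PiE_iff)
  finally show ?thesis .
qed

lemma coord_ideal:
  assumes m: "ideal m R"
  shows "ideal {t \<in> carrier T. \<forall>b\<in>B. coord t b \<in> m} T"
proof -
  let ?M = "{t \<in> carrier T. \<forall>b\<in>B. coord t b \<in> m}"
  have m_sub: "additive_subgroup m R" using ideal.axioms(1)[OF m] .
  have mult_closed: "y \<otimes>\<^bsub>T\<^esub> x \<in> ?M" if x: "x \<in> ?M" and y: "y \<in> carrier T" for x y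
  proof -
    have "coord (y \<otimes>\<^bsub>T\<^esub> x) b \<in> m" if b: "b \<in> B" for b
    proof -
      have "coord (y \<otimes>\<^bsub>T\<^esub> x) b = (\<Oplus>b'\<in>B. coord x b' \<otimes> coord (y \<otimes>\<^bsub>T\<^esub> b') b)"
        using linear_functional_expand[OF linear_functional_mult[OF linear_functional_coord[OF b] y]] x
        by simp
      also have "\<dots> \<in> m"
        using x b y basis_carrier coord_closed ideal.I_r_closed[OF m]
        by (intro R.finsum_in_ideal[OF m finite_basis]) (auto simp: PiE_iff)
      finally show ?thesis .
    qed
    then show ?thesis using x y by auto
  qed
  show ?thesis
    unfolding a_inv_def[symmetric]
  proof (intro subgroup.intro idealI[OF S.ring_axioms])
    show "?M \<subseteq> carrier (add_monoid T)" by auto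
    show "x \<otimes>\<^bsub>add_monoid T\<^esub> y \<in> ?M" if "x \<in> ?M" "y \<in> ?M" for x y
      using that linear_functionalD(2)[OF linear_functional_coord] additive_subgroup.a_closed[OF m_sub]
      by auto
    show "\<one>\<^bsub>add_monoid T\<^esub> \<in> ?M"
      using linear_functional_zero[OF linear_functional_coord] additive_subgroup.zero_closed[OF m_sub]
      by auto
    show "inv\<^bsub>add_monoid T\<^esub> x \<in> ?M" if "x \<in> ?M" for x
      using that linear_functional_minus[OF linear_functional_coord] additive_subgroup.a_inv_closed[OF m_sub]
      unfolding a_inv_def[symmetric] by auto
    show "x \<otimes>\<^bsub>T\<^esub> a \<in> ?M" if "a \<in> ?M" "x \<in> carrier T" for a x
      using mult_closed that .
    show "a \<otimes>\<^bsub>T\<^esub> x \<in> ?M" if "a \<in> ?M" "x \<in> carrier T" for a x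
      using mult_closed that S.m_comm by auto
  qed
qed

lemma extended_ideal_iff_coord:
  assumes m: "ideal m R" and t: "t \<in> carrier T"
  shows "t \<in> Idl\<^bsub>T\<^esub> (\<phi> ` m) \<longleftrightarrow> (\<forall>b\<in>B. coord t b \<in> m)"
proof
  have m_carrier: "\<phi> ` m \<subseteq> carrier T" using ideal.Icarr[OF m] by auto
  have "coord (\<phi> r) b \<in> m" if r: "r \<in> m" and b: "b \<in> B" for r b
  proof -
    have r_carrier: "r \<in> carrier R" using ideal.Icarr[OF m r] .
    have "coord (\<phi> r) b = coord (\<phi> r \<otimes>\<^bsub>T\<^esub> \<one>\<^bsub>T\<^esub>) b" using r_carrier by simp
    also have "\<dots> = r \<otimes> coord \<one>\<^bsub>T\<^esub> b"
      using linear_functionalD(3)[OF linear_functional_coord[OF b] r_carrier] by simp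
    finally show ?thesis
      using ideal.I_r_closed[OF m r] linear_functionalD(1)[OF linear_functional_coord[OF b]] by simp
  qed
  then have "\<phi> ` m \<subseteq> {t \<in> carrier T. \<forall>b\<in>B. coord t b \<in> m}" using m_carrier by blast
  then have "Idl\<^bsub>T\<^esub> (\<phi> ` m) \<subseteq> {t \<in> carrier T. \<forall>b\<in>B. coord t b \<in> m}"
    using S.genideal_minimal[OF coord_ideal[OF m]] by blast
  then show "t \<in> Idl\<^bsub>T\<^esub> (\<phi> ` m) \<Longrightarrow> \<forall>b\<in>B. coord t b \<in> m" by blast
next
  assume coords: "\<forall>b\<in>B. coord t b \<in> m"
  have m_carrier: "\<phi> ` m \<subseteq> carrier T" using ideal.Icarr[OF m] by auto
  have "lincomb (coord t) \<in> Idl\<^bsub>T\<^esub> (\<phi> ` m)"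
    unfolding lincomb_def
    using coords basis_carrier S.genideal_self[OF m_carrier]
      ideal.I_r_closed[OF S.genideal_ideal[OF m_carrier]]
    by (intro S.finsum_in_ideal[OF S.genideal_ideal[OF m_carrier] finite_basis]) blast
  then show "t \<in> Idl\<^bsub>T\<^esub> (\<phi> ` m)" using lincomb_coord[OF t] by simp
qed

section \<open>Duality from the Gorenstein fibre\<close>

definition nondegenerate_coord :: "'a set \<Rightarrow> 'c \<Rightarrow> bool"
  where "nondegenerate_coord m b0 \<longleftrightarrow> b0 \<in> B \<and>
    (\<forall>t\<in>carrier T. t \<notin> Idl\<^bsub>T\<^esub> (\<phi> ` m) \<longrightarrow> (\<exists>u\<in>carrier T. coord (u \<otimes>\<^bsub>T\<^esub> t) b0 \<notin> m))"

lemma gorenstein_ex_nondegenerate_coord: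
  assumes m: "ideal m R" and gor: "gorenstein_artinian (T Quot (Idl\<^bsub>T\<^esub> (\<phi> ` m)))"
  shows "\<exists>b0. nondegenerate_coord m b0"
proof -
  define I where "I = Idl\<^bsub>T\<^esub> (\<phi> ` m)"
  define A where "A = T Quot I"
  have I: "ideal I T" unfolding I_def using ideal.Icarr[OF m] by (intro S.genideal_ideal) auto
  have A: "cring A" unfolding A_def using ideal.quotient_is_cring[OF I S.is_cring] .
  have quot: "(+>\<^bsub>T\<^esub>) I \<in> ring_hom T A" unfolding A_def using ideal.rcos_ring_hom[OF I] .
  have A_carrier: "carrier A = (+>\<^bsub>T\<^esub>) I ` carrier T" unfolding A_def by (rule S.FactRing_carrier)
  have A_zero: "\<zero>\<^bsub>A\<^esub> = I" unfolding A_def FactRing_def by simp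
  obtain n s where art: "artinian_ring A" and loc: "local_ring A n"
    and s: "s \<in> socle A n" "s \<noteq> \<zero>\<^bsub>A\<^esub>" and socle: "socle A n = {a \<otimes>\<^bsub>A\<^esub> s | a. a \<in> carrier A}"
    using gor unfolding gorenstein_artinian_def A_def I_def by blast
  obtain s0 where s0: "s0 \<in> carrier T" "s = I +>\<^bsub>T\<^esub> s0"
    using s(1) A_carrier unfolding socle_def by auto
  have "s0 \<notin> I" using s(2) s0 S.a_rcos_zero[OF I] A_zero by auto
  then obtain b0 where b0: "b0 \<in> B" "coord s0 b0 \<notin> m"
    using extended_ideal_iff_coord[OF m s0(1)] unfolding I_def by blast
  have "\<exists>u\<in>carrier T. coord (u \<otimes>\<^bsub>T\<^esub> t) b0 \<notin> m" if t: "t \<in> carrier T" and "t \<notin> I" for t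
  proof -
    \<comment> \<open>the socle generator is a multiple of every nonzero element of \<open>T/mT\<close>\<close>
    have "I +>\<^bsub>T\<^esub> t \<noteq> \<zero>\<^bsub>A\<^esub>" using ideal.rcos_const_imp_mem[OF I t] \<open>t \<notin> I\<close> A_zero by auto
    then have "s \<in> PIdl\<^bsub>A\<^esub> (I +>\<^bsub>T\<^esub> t)"
      using cring.socle_generator_in_cgenideal[OF A art loc s(1) socle] A_carrier t by blast
    then obtain u where u: "u \<in> carrier T" "s = (I +>\<^bsub>T\<^esub> u) \<otimes>\<^bsub>A\<^esub> (I +>\<^bsub>T\<^esub> t)"
      unfolding cgenideal_def A_carrier by auto
    then have "I +>\<^bsub>T\<^esub> s0 = I +>\<^bsub>T\<^esub> (u \<otimes>\<^bsub>T\<^esub> t)" using s0(2) ring_hom_mult[OF quot u(1) t] by simp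
    then have "s0 \<ominus>\<^bsub>T\<^esub> u \<otimes>\<^bsub>T\<^esub> t \<in> I" using S.quotient_eq_iff_same_a_r_cos[OF I s0(1)] u t by simp
    then have diff: "coord (s0 \<ominus>\<^bsub>T\<^esub> u \<otimes>\<^bsub>T\<^esub> t) b0 \<in> m"
      using extended_ideal_iff_coord[OF m] s0 u t b0 unfolding I_def by simp
    have "s0 = (s0 \<ominus>\<^bsub>T\<^esub> u \<otimes>\<^bsub>T\<^esub> t) \<oplus>\<^bsub>T\<^esub> u \<otimes>\<^bsub>T\<^esub> t" using s0 u t by algebra
    then have "coord s0 b0 = coord (s0 \<ominus>\<^bsub>T\<^esub> u \<otimes>\<^bsub>T\<^esub> t) b0 \<oplus> coord (u \<otimes>\<^bsub>T\<^esub> t) b0"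
      using linear_functionalD(2)[OF linear_functional_coord[OF b0(1)]] s0 u t by (metis S.m_closed S.minus_closed)
    then show ?thesis
      using u diff b0(2) additive_subgroup.a_closed[OF ideal.axioms(1)[OF m]] by metis
  qed
  then show ?thesis unfolding nondegenerate_coord_def I_def using b0 by blast
qed

lemma gram_nondegenerate_mod:
  assumes m: "ideal m R" and nd: "nondegenerate_coord m b0"
  shows "R.nondegenerate_mod m B B (\<lambda>i j. coord (i \<otimes>\<^bsub>T\<^esub> j) b0)"
  unfolding R.nondegenerate_mod_def
proof (intro ballI impI)
  fix x i assume x: "x \<in> B \<rightarrow> carrier R" and i: "i \<in> B"
    and small: "\<forall>j\<in>B. R.vec_mat B (\<lambda>i j. coord (i \<otimes>\<^bsub>T\<^esub> j) b0) x j \<in> m"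
  have b0: "b0 \<in> B" using nd unfolding nondegenerate_coord_def by simp
  have t: "lincomb x \<in> carrier T" using lincomb_closed[OF x] .
  have "lincomb x \<in> Idl\<^bsub>T\<^esub> (\<phi> ` m)"
  proof (rule ccontr)
    assume "lincomb x \<notin> Idl\<^bsub>T\<^esub> (\<phi> ` m)"
    then obtain u where u: "u \<in> carrier T" "coord (u \<otimes>\<^bsub>T\<^esub> lincomb x) b0 \<notin> m"
      using nd t unfolding nondegenerate_coord_def by blast
    have f: "linear_functional R T \<phi> (\<lambda>z. coord (lincomb x \<otimes>\<^bsub>T\<^esub> z) b0)"
      using linear_functional_mult[OF linear_functional_coord[OF b0] t] .
    have "coord (u \<otimes>\<^bsub>T\<^esub> lincomb x) b0 = (\<Oplus>j\<in>B. coord u j \<otimes> coord (lincomb x \<otimes>\<^bsub>T\<^esub> j) b0)"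
      using linear_functional_expand[OF f u(1)] u(1) t by (simp add: S.m_comm)
    also have "\<dots> \<in> m"
      using small coord_mult_lincomb[OF x basis_carrier b0] coord_closed[OF u(1)]
        ideal.I_l_closed[OF m]
      by (intro R.finsum_in_ideal[OF m finite_basis]) (auto simp: PiE_iff)
    finally show False using u(2) by simp
  qed
  then show "x i \<in> m" using extended_ideal_iff_coord[OF m t] coord_lincomb[OF x i] i by auto
qed

lemma linear_functional_eq_coord_mult:
  assumes loc: "local_ring R m" and nd: "nondegenerate_coord m b0"
    and f: "linear_functional R T \<phi> f"
  shows "\<exists>t\<in>carrier T. \<forall>z\<in>carrier T. f z = coord (t \<otimes>\<^bsub>T\<^esub> z) b0"
proof -
  have b0: "b0 \<in> B" using nd unfolding nondegenerate_coord_def by simp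
  have "\<forall>y \<in> B \<rightarrow> carrier R. \<exists>x \<in> B \<rightarrow> carrier R.
      \<forall>j\<in>B. R.vec_mat B (\<lambda>i j. coord (i \<otimes>\<^bsub>T\<^esub> j) b0) x j = y j"
    using R.nondegenerate_mod_bijective[OF loc finite_basis finite_basis refl _
        gram_nondegenerate_mod[OF R.local_ringD(1)[OF loc] nd]]
      linear_functionalD(1)[OF linear_functional_coord[OF b0]] basis_carrier b0
    by blast
  then obtain x where x: "x \<in> B \<rightarrow> carrier R"
    and sol: "\<And>j. j \<in> B \<Longrightarrow> R.vec_mat B (\<lambda>i j. coord (i \<otimes>\<^bsub>T\<^esub> j) b0) x j = f j"
    using linear_functionalD(1)[OF f] basis_carrier by (metis (no_types, lifting) Pi_I)
  define t where "t = lincomb x"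
  have t: "t \<in> carrier T" unfolding t_def using lincomb_closed[OF x] .
  have g: "linear_functional R T \<phi> (\<lambda>z. coord (t \<otimes>\<^bsub>T\<^esub> z) b0)"
    using linear_functional_mult[OF linear_functional_coord[OF b0] t] .
  have "f z = coord (t \<otimes>\<^bsub>T\<^esub> z) b0" if z: "z \<in> carrier T" for z
  proof -
    have "f z = (\<Oplus>j\<in>B. coord z j \<otimes> f j)" using linear_functional_expand[OF f z] .
    also have "\<dots> = (\<Oplus>j\<in>B. coord z j \<otimes> coord (t \<otimes>\<^bsub>T\<^esub> j) b0)"
      unfolding t_def using sol coord_mult_lincomb[OF x basis_carrier b0] coord_closed[OF z]
        linear_functionalD(1)[OF f] basis_carrier
      by (intro R.finsum_cong') (auto simp: PiE_iff)
    also have "\<dots> = coord (t \<otimes>\<^bsub>T\<^esub> z) b0" using linear_functional_expand[OF g z] by simp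
    finally show ?thesis .
  qed
  then show ?thesis using t by blast
qed

lemma nondegenerate_coord_eq_zero:
  assumes loc: "local_ring R m" and nd: "nondegenerate_coord m b0"
    and w: "w \<in> carrier T" and zero: "\<And>z. z \<in> carrier T \<Longrightarrow> coord (w \<otimes>\<^bsub>T\<^esub> z) b0 = \<zero>"
  shows "w = \<zero>\<^bsub>T\<^esub>"
proof -
  have b0: "b0 \<in> B" using nd unfolding nondegenerate_coord_def by simp
  have cw: "coord w \<in> B \<rightarrow> carrier R" using coord_closed[OF w] by auto
  have "\<forall>j\<in>B. R.vec_mat B (\<lambda>i j. coord (i \<otimes>\<^bsub>T\<^esub> j) b0) (coord w) j = \<zero>"
    using coord_mult_lincomb[OF cw basis_carrier b0] lincomb_coord[OF w] zero basis_carrier by simp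
  then have "\<forall>b\<in>B. coord w b = \<zero>"
    using R.nondegenerate_mod_bijective[OF loc finite_basis finite_basis refl _
        gram_nondegenerate_mod[OF R.local_ringD(1)[OF loc] nd]]
      linear_functionalD(1)[OF linear_functional_coord[OF b0]] basis_carrier cw
    by blast
  then have "lincomb (coord w) = (\<Oplus>\<^bsub>T\<^esub> b\<in>B. \<zero>\<^bsub>T\<^esub>)"
    unfolding lincomb_def using basis_carrier by (intro S.finsum_cong') auto
  then show ?thesis using lincomb_coord[OF w] by simp
qed

lemma annihilator_not_in_extended_ideal:
  assumes loc: "local_ring R m" and nd: "nondegenerate_coord m b0" and J: "ideal J T"
    and f: "linear_functional R T \<phi> f" and f_J: "\<forall>q\<in>J. f q = \<zero>" and f_one: "f \<one>\<^bsub>T\<^esub> = \<one>"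
  shows "\<not> annihilator T J \<subseteq> Idl\<^bsub>T\<^esub> (\<phi> ` m)"
proof -
  obtain t where t: "t \<in> carrier T" and f_eq: "\<And>z. z \<in> carrier T \<Longrightarrow> f z = coord (t \<otimes>\<^bsub>T\<^esub> z) b0"
    using linear_functional_eq_coord_mult[OF loc nd f] by blast
  have "t \<otimes>\<^bsub>T\<^esub> q = \<zero>\<^bsub>T\<^esub>" if q: "q \<in> J" for q
  proof (rule nondegenerate_coord_eq_zero[OF loc nd])
    have q_carrier: "q \<in> carrier T" using ideal.Icarr[OF J q] .
    then show "t \<otimes>\<^bsub>T\<^esub> q \<in> carrier T" using t by simp
    fix z assume z: "z \<in> carrier T"
    have "coord (t \<otimes>\<^bsub>T\<^esub> q \<otimes>\<^bsub>T\<^esub> z) b0 = f (q \<otimes>\<^bsub>T\<^esub> z)" using f_eq t q_carrier z by (simp add: S.m_assoc)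
    then show "coord (t \<otimes>\<^bsub>T\<^esub> q \<otimes>\<^bsub>T\<^esub> z) b0 = \<zero>" using f_J ideal.I_r_closed[OF J q z] by simp
  qed
  then have "t \<in> annihilator T J" unfolding annihilator_def using t by simp
  moreover have "coord t b0 = \<one>" using f_eq[of "\<one>\<^bsub>T\<^esub>"] f_one t by simp
  then have "t \<notin> Idl\<^bsub>T\<^esub> (\<phi> ` m)"
    using extended_ideal_iff_coord[OF R.local_ringD(1)[OF loc] t] R.local_ringD(2)[OF loc] nd
    unfolding nondegenerate_coord_def by auto
  ultimately show ?thesis by blast
qed

lemma ex_unital_functional_if_annihilator:
  assumes loc: "local_ring R m" and t: "t \<in> annihilator T J" and t_m: "t \<notin> Idl\<^bsub>T\<^esub> (\<phi> ` m)"
  shows "\<exists>f. linear_functional R T \<phi> f \<and> (\<forall>q\<in>J. f q = \<zero>) \<and> f \<one>\<^bsub>T\<^esub> = \<one>"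
proof -
  have t_carrier: "t \<in> carrier T" using t unfolding annihilator_def by simp
  obtain b where b: "b \<in> B" "coord t b \<notin> m"
    using extended_ideal_iff_coord[OF R.local_ringD(1)[OF loc] t_carrier] t_m by blast
  have unit: "coord t b \<in> Units R"
    using R.local_ring_Units[OF loc _ b(2)] coord_closed[OF t_carrier] b(1) by auto
  define f where "f z = inv (coord t b) \<otimes> coord (t \<otimes>\<^bsub>T\<^esub> z) b" for z
  have "linear_functional R T \<phi> f"
    unfolding f_def using unit
    by (intro linear_functional_scale linear_functional_mult linear_functional_coord b t_carrier) auto
  moreover have "f q = \<zero>" if "q \<in> J" for q
    using t that linear_functional_zero[OF linear_functional_coord[OF b(1)]] unit
    unfolding f_def annihilator_def by simp
  moreover have "f \<one>\<^bsub>T\<^esub> = \<one>" unfolding f_def using unit t_carrier by simp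
  ultimately show ?thesis by blast
qed

end

theorem theorem10:
  fixes R :: "('a, 'm) ring_scheme" and T :: "('b, 'n) ring_scheme"
    and m :: "'a set" and \<eta> :: "'b set" and \<phi> :: "'a \<Rightarrow> 'b" and J :: "'b set"
  assumes "noetherian_ring R" and "local_ring R m"
    and "noetherian_ring T" and "local_ring T \<eta>"
    and "\<phi> \<in> ring_hom R T" and "\<phi> ` m \<subseteq> \<eta>"
    and "finite_free_via R T \<phi>"
    and "gorenstein_artinian (T Quot (Idl\<^bsub>T\<^esub> (\<phi> ` m)))"
    and "ideal J T"
  shows "splits R (T Quot J) (\<lambda>r. J +>\<^bsub>T\<^esub> \<phi> r)
           \<longleftrightarrow> \<not> (annihilator T J \<subseteq> Idl\<^bsub>T\<^esub> (\<phi> ` m))"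
proof -
  obtain B where B: "finite B" "B \<subseteq> carrier T"
    "\<forall>t\<in>carrier T. \<exists>!c. c \<in> B \<rightarrow>\<^sub>E carrier R \<and> t = (\<Oplus>\<^bsub>T\<^esub> b\<in>B. \<phi> (c b) \<otimes>\<^bsub>T\<^esub> b)"
    using assms(7) unfolding finite_free_via_def by blast
  have "cring R" "cring T" using assms(2,4) unfolding local_ring_def by blast+
  then interpret free_basis R T \<phi> B
    using ring_hom_cring.intro ring_hom_cring_axioms.intro[OF assms(5)]
      free_basis_axioms.intro[OF B(1,2) B(3)[rule_format]]
    by (intro free_basis.intro) blast+
  obtain b0 where nd: "nondegenerate_coord m b0"
    using gorenstein_ex_nondegenerate_coord[OF R.local_ringD(1)[OF assms(2)] assms(8)] by blast
  have "(\<exists>f. linear_functional R T \<phi> f \<and> (\<forall>q\<in>J. f q = \<zero>\<^bsub>R\<^esub>) \<and> f \<one>\<^bsub>T\<^esub> = \<one>\<^bsub>R\<^esub>)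
      \<longleftrightarrow> \<not> annihilator T J \<subseteq> Idl\<^bsub>T\<^esub> (\<phi> ` m)"
    using annihilator_not_in_extended_ideal[OF assms(2) nd assms(9)]
      ex_unital_functional_if_annihilator[OF assms(2)] by blast
  then show ?thesis using splits_iff_linear_functional[OF assms(9)] by simp
qed

end
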